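(* Let $\Phi=\{\phi_j\}$ be an orthonormal basis of $L^2([0,1],\mu)$, let $A>0$, $k>1/2$, and let $C\ge A^2/(2k-1)$. Then $$\mathcal{E}_k(\Phi,A)\subseteq\Theta_k(\Phi,A,C)\subseteq\mathcal{A}_k(\Phi,A,C).$$
   Context: Each $f\in L^2([0,1],\mu)$ is written $f=\sum_j\theta_j\phi_j$. $\mathcal{E}_k(\Phi,A)=\{f:|\theta_j|\le Aj^{-k}\ \forall j\ge1\}$. $\Theta_k(\Phi,A,C)$ is the set of $f$ whose coefficients' non-increasing rearrangement by absolute value $\{\theta_{(j)}\}$ satisfies $|\theta_{(j)}|\le Aj^{-k}$ for all $j\ge1$ and with $\sum_{j=J+1}^\infty\theta_j^2\le CJ^{-2k+1}$ for all $J\ge1$. $\mathcal{A}_k(\Phi,A,C)=\{f:|\theta_1|\le A,\ \sum_{j=J+1}^\infty\theta_j^2\le CJ^{-2k+1}\ \forall J\ge1\}$. *)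

theory Defs
  imports "HOL-Analysis.Analysis"
begin

text \<open>Real L^2([0,1],mu) rendered as square-integrable real functions (representatives).
  Basis functions and coefficients are indexed from 1.\<close>

definition L2 :: "real measure \<Rightarrow> (real \<Rightarrow> real) set" where
  "L2 M = {f. f \<in> borel_measurable M \<and> integrable M (\<lambda>x. (f x)\<^sup>2)}"

definition coeff :: "real measure \<Rightarrow> (nat \<Rightarrow> real \<Rightarrow> real) \<Rightarrow> (real \<Rightarrow> real) \<Rightarrow> nat \<Rightarrow> real" where
  "coeff M \<phi> f j = (LINT x|M. f x * \<phi> j x)"

definition orthonormal_basis_L2 :: "real measure \<Rightarrow> (nat \<Rightarrow> real \<Rightarrow> real) \<Rightarrow> bool" where
  "orthonormal_basis_L2 M \<phi> \<longleftrightarrow>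
     (\<forall>j\<ge>1. \<phi> j \<in> L2 M) \<and>
     (\<forall>i\<ge>1. \<forall>j\<ge>1. (LINT x|M. \<phi> i x * \<phi> j x) = (if i = j then 1 else 0)) \<and>
     (\<forall>f\<in>L2 M. (\<lambda>n. LINT x|M. (f x - (\<Sum>j=1..n. coeff M \<phi> f j * \<phi> j x))\<^sup>2) \<longlonglongrightarrow> 0)"

text \<open>Absolute value of the j-th term (j >= 1) of the non-increasing rearrangement of
  (|theta_i|)_{i>=1}, via the distribution function.\<close>
definition rearr :: "(nat \<Rightarrow> real) \<Rightarrow> nat \<Rightarrow> real" where
  "rearr \<theta> j = Inf {t. 0 \<le> t \<and> finite {i. 1 \<le> i \<and> t < \<bar>\<theta> i\<bar>}
                        \<and> card {i. 1 \<le> i \<and> t < \<bar>\<theta> i\<bar>} < j}"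

definition tail_sq :: "(nat \<Rightarrow> real) \<Rightarrow> nat \<Rightarrow> real" where
  "tail_sq \<theta> J = (\<Sum>\<^sub>\<infinity>j\<in>{J+1..}. (\<theta> j)\<^sup>2)"

definition Ecal :: "real measure \<Rightarrow> (nat \<Rightarrow> real \<Rightarrow> real) \<Rightarrow> real \<Rightarrow> real \<Rightarrow> (real \<Rightarrow> real) set" where
  "Ecal M \<phi> k A = {f \<in> L2 M. \<forall>j\<ge>1. \<bar>coeff M \<phi> f j\<bar> \<le> A * real j powr (-k)}"

definition Theta :: "real measure \<Rightarrow> (nat \<Rightarrow> real \<Rightarrow> real) \<Rightarrow> real \<Rightarrow> real \<Rightarrow> real \<Rightarrow> (real \<Rightarrow> real) set" where
  "Theta M \<phi> k A C = {f \<in> L2 M.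
      (\<forall>j\<ge>1. rearr (coeff M \<phi> f) j \<le> A * real j powr (-k)) \<and>
      (\<forall>J\<ge>1. tail_sq (coeff M \<phi> f) J \<le> C * real J powr (-2*k+1))}"

definition Acal :: "real measure \<Rightarrow> (nat \<Rightarrow> real \<Rightarrow> real) \<Rightarrow> real \<Rightarrow> real \<Rightarrow> real \<Rightarrow> (real \<Rightarrow> real) set" where
  "Acal M \<phi> k A C = {f \<in> L2 M.
      \<bar>coeff M \<phi> f 1\<bar> \<le> A \<and>
      (\<forall>J\<ge>1. tail_sq (coeff M \<phi> f) J \<le> C * real J powr (-2*k+1))}"

end

theory Submission
  imports Defs
begin

text \<open>If \<open>|\<theta>\<^sub>j| \<le> A j\<^sup>-\<^sup>k\<close>, fewer than \<open>j\<close> coefficients exceed \<open>A j\<^sup>-\<^sup>k\<close>, so the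
  rearrangement obeys the same bound; and by the mean value theorem
  \<open>(2k-1) j\<^sup>-\<^sup>2\<^sup>k \<le> (j-1)\<^sup>1\<^sup>-\<^sup>2\<^sup>k - j\<^sup>1\<^sup>-\<^sup>2\<^sup>k\<close>, so the tail \<open>\<Sum>\<^sub>j\<^sub>>\<^sub>J \<theta>\<^sub>j\<^sup>2\<close> is dominated by a
  telescoping series with sum \<open>A\<^sup>2/(2k-1) J\<^sup>1\<^sup>-\<^sup>2\<^sup>k\<close>.  For the second inclusion,
  \<open>|\<theta>\<^sub>1| \<le> \<theta>\<^sub>(\<^sub>1\<^sub>)\<close> as soon as the coefficients are bounded, which they are since
  \<open>|f \<phi>\<^sub>j| \<le> (f\<^sup>2 + \<phi>\<^sub>j\<^sup>2)/2\<close>.\<close>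

lemma powr_neg_diff_ge:
  fixes x p :: real
  assumes "x > 1" "p > 0"
  shows "p * x powr (-(p+1)) \<le> (x-1) powr (-p) - x powr (-p)"
proof -
  have "\<exists>z. x-1 < z \<and> z < x \<and>
      (\<lambda>y. y powr (-p)) x - (\<lambda>y. y powr (-p)) (x-1) = (x - (x-1)) * ((-p) * z powr (-p-1))"
  proof (rule MVT2)
    fix y assume "x - 1 \<le> y" "y \<le> x"
    then have "y > 0" using assms by auto
    from has_real_derivative_powr[OF this, of "-p"]
    show "((\<lambda>y. y powr (-p)) has_real_derivative ((-p) * y powr (-p-1))) (at y)" by simp
  qed simp
  then obtain z where z: "x-1 < z" "z < x" "x powr (-p) - (x-1) powr (-p) = (-p) * z powr (-p-1)"
    by auto
  have "x powr (-p-1) \<le> z powr (-p-1)"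
    using z assms by (intro powr_mono2') auto
  then have "p * x powr (-p-1) \<le> p * z powr (-p-1)"
    using assms by (simp add: mult_left_mono)
  then show ?thesis
    using z(3) by simp
qed

lemma has_sum_powr_neg_telescope:
  fixes p :: real
  assumes "p > 0" "J \<ge> 1"
  shows "((\<lambda>j. (real j - 1) powr (-p) - real j powr (-p)) has_sum real J powr (-p)) {J+1..}"
    (is "(?d has_sum _) _")
proof -
  define F where "F n = real (n+J) powr (-p)" for n
  have "filterlim (\<lambda>n. real (n+J)) at_top sequentially"
    by (intro filterlim_compose[OF filterlim_real_sequentially] filterlim_add_const_nat_at_top)
  then have "F \<longlonglongrightarrow> 0"
    unfolding F_def using assms by (intro tendsto_neg_powr) auto
  then have "(\<lambda>n. F n - F (Suc n)) sums (F 0 - 0)"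
    by (rule telescope_sums')
  moreover have "F n - F (Suc n) = ?d (n+J+1)" for n
    by (simp add: F_def add.commute)
  ultimately have "(\<lambda>n. ?d (n+J+1)) sums real J powr (-p)"
    by (simp add: F_def)
  moreover have "?d (n+J+1) \<ge> 0" for n
    using assms by (simp add: powr_mono2')
  ultimately have "((\<lambda>n. ?d (n+J+1)) has_sum real J powr (-p)) UNIV"
    by (intro sums_nonneg_imp_has_sum) auto
  moreover have "bij_betw (\<lambda>n. n+J+1) UNIV {J+1..}"
    by (rule bij_betw_byWitness[where f'="\<lambda>m. m - (J+1)"]) auto
  ultimately show ?thesis
    using has_sum_reindex_bij_betw[of "\<lambda>n. n+J+1" UNIV "{J+1..}" ?d] by (simp add: comp_def)
qed

lemma tail_sq_le_powr:
  fixes \<theta> :: "nat \<Rightarrow> real" and A k :: real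
  assumes "k > 1/2" "J \<ge> 1"
    and decay: "\<And>j. j \<ge> J+1 \<Longrightarrow> \<bar>\<theta> j\<bar> \<le> A * real j powr (-k)"
  shows "tail_sq \<theta> J \<le> A\<^sup>2 / (2*k-1) * real J powr (-2*k+1)"
proof -
  define p where "p = 2*k-1"
  have p: "p > 0" using assms(1) by (simp add: p_def)
  define c where "c j = A\<^sup>2/p * ((real j - 1) powr (-p) - real j powr (-p))" for j :: nat
  have c: "((c has_sum (A\<^sup>2/p * real J powr (-p))) {J+1..})"
    unfolding c_def using has_sum_powr_neg_telescope[OF p assms(2)] by (rule has_sum_cmult_right)
  have sq_le_c: "(\<theta> j)\<^sup>2 \<le> c j" if j: "j \<ge> J+1" for j
  proof -
    have "(\<theta> j)\<^sup>2 \<le> (A * real j powr (-k))\<^sup>2"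
      using decay[OF j] by (metis abs_ge_zero power2_abs power_mono)
    also have "\<dots> = A\<^sup>2/p * (p * real j powr (-(p+1)))"
      using p by (simp add: power_mult_distrib p_def powr_add[symmetric] power2_eq_square)
    also have "\<dots> \<le> c j"
      unfolding c_def using powr_neg_diff_ge[of "real j" p] j assms(2) p
      by (intro mult_left_mono) auto
    finally show ?thesis .
  qed
  have "c summable_on {J+1..}"
    using c by (rule has_sum_imp_summable)
  moreover from this have "(\<lambda>j. (\<theta> j)\<^sup>2) summable_on {J+1..}"
    using sq_le_c by (rule summable_on_comparison_test) simp_all
  ultimately have "tail_sq \<theta> J \<le> infsum c {J+1..}"
    unfolding tail_sq_def using sq_le_c by (intro infsum_mono) auto
  also have "\<dots> = A\<^sup>2/p * real J powr (-p)"
    using c by (rule infsumI)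
  finally show ?thesis by (simp add: p_def)
qed

lemma rearr_le:
  assumes "j \<ge> 1" "t \<ge> 0" and "\<And>i. i \<ge> 1 \<Longrightarrow> t < \<bar>\<theta> i\<bar> \<Longrightarrow> i < j"
  shows "rearr \<theta> j \<le> t"
proof -
  have sub: "{i. 1 \<le> i \<and> t < \<bar>\<theta> i\<bar>} \<subseteq> {1..<j}"
    using assms(3) by auto
  then have "card {i. 1 \<le> i \<and> t < \<bar>\<theta> i\<bar>} \<le> card {1..<j}"
    by (intro card_mono) auto
  moreover have "card {1..<j} < j" using assms(1) by simp
  moreover have "finite {i. 1 \<le> i \<and> t < \<bar>\<theta> i\<bar>}"
    using sub by (rule finite_subset) simp
  ultimately have "t \<in> {t. 0 \<le> t \<and> finite {i. 1 \<le> i \<and> t < \<bar>\<theta> i\<bar>}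
                        \<and> card {i. 1 \<le> i \<and> t < \<bar>\<theta> i\<bar>} < j}"
    using assms(2) by simp
  then show ?thesis
    unfolding rearr_def by (rule cInf_lower) (rule bdd_belowI[of _ 0], blast)
qed

lemma rearr_le_powr:
  fixes A k :: real
  assumes "A \<ge> 0" "k \<ge> 0" "j \<ge> 1" and decay: "\<And>i. i \<ge> 1 \<Longrightarrow> \<bar>\<theta> i\<bar> \<le> A * real i powr (-k)"
  shows "rearr \<theta> j \<le> A * real j powr (-k)"
proof (rule rearr_le[OF assms(3)])
  show "A * real j powr (-k) \<ge> 0" using assms(1) by simp
  fix i assume i: "i \<ge> 1" and "A * real j powr (-k) < \<bar>\<theta> i\<bar>"
  then have less: "A * real j powr (-k) < A * real i powr (-k)"
    using decay[OF i] by linarith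
  show "i < j"
  proof (rule ccontr)
    assume "\<not> i < j"
    then have "real i powr (-k) \<le> real j powr (-k)"
      using assms(2,3) by (intro powr_mono2') auto
    then have "A * real i powr (-k) \<le> A * real j powr (-k)"
      using assms(1) by (rule mult_left_mono)
    with less show False by simp
  qed
qed

lemma abs_le_rearr_1:
  assumes "\<And>i. i \<ge> 1 \<Longrightarrow> \<bar>\<theta> i\<bar> \<le> B" "i \<ge> 1"
  shows "\<bar>\<theta> i\<bar> \<le> rearr \<theta> 1"
proof -
  let ?S = "{t. 0 \<le> t \<and> finite {i. 1 \<le> i \<and> t < \<bar>\<theta> i\<bar>}
               \<and> card {i. 1 \<le> i \<and> t < \<bar>\<theta> i\<bar>} < (1::nat)}"
  have "{i. 1 \<le> i \<and> max B 0 < \<bar>\<theta> i\<bar>} = {}"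
    using assms(1) by (auto simp: not_less le_max_iff_disj)
  then have "max B 0 \<in> ?S"
    by (simp only: mem_Collect_eq) simp
  then have "?S \<noteq> {}"
    by (metis equals0D)
  moreover have "\<bar>\<theta> i\<bar> \<le> t" if "t \<in> ?S" for t
    using that assms(2) by (cases "t < \<bar>\<theta> i\<bar>") auto
  ultimately have "\<bar>\<theta> i\<bar> \<le> Inf ?S"
    by (rule cInf_greatest)
  then show ?thesis
    by (simp add: rearr_def)
qed

lemma abs_coeff_le:
  assumes "orthonormal_basis_L2 M \<phi>" "f \<in> L2 M" "j \<ge> 1"
  shows "\<bar>coeff M \<phi> f j\<bar> \<le> ((LINT x|M. (f x)\<^sup>2) + 1) / 2"
proof -
  have "\<phi> j \<in> L2 M" and norm1: "(LINT x|M. \<phi> j x * \<phi> j x) = 1"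
    using assms unfolding orthonormal_basis_L2_def by auto
  then have f: "f \<in> borel_measurable M" "integrable M (\<lambda>x. (f x)\<^sup>2)"
    and \<phi>: "\<phi> j \<in> borel_measurable M" "integrable M (\<lambda>x. (\<phi> j x)\<^sup>2)"
    using assms(2) unfolding L2_def by auto
  have amgm: "\<bar>f x * \<phi> j x\<bar> \<le> ((f x)\<^sup>2 + (\<phi> j x)\<^sup>2) / 2" for x
    using sum_squares_ge_zero[of "\<bar>f x\<bar> - \<bar>\<phi> j x\<bar>" 0]
    by (simp add: power2_eq_square algebra_simps abs_mult)
  have bound_int: "integrable M (\<lambda>x. ((f x)\<^sup>2 + (\<phi> j x)\<^sup>2) / 2)"
    using f \<phi> by simp
  have "integrable M (\<lambda>x. f x * \<phi> j x)"
  proof (rule Bochner_Integration.integrable_bound[OF bound_int])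
    show "(\<lambda>x. f x * \<phi> j x) \<in> borel_measurable M" using f(1) \<phi>(1) by measurable
    show "AE x in M. norm (f x * \<phi> j x) \<le> norm (((f x)\<^sup>2 + (\<phi> j x)\<^sup>2) / 2)"
      using amgm by (intro AE_I2) (auto intro: order_trans)
  qed
  then have "\<bar>coeff M \<phi> f j\<bar> \<le> (LINT x|M. ((f x)\<^sup>2 + (\<phi> j x)\<^sup>2) / 2)"
    unfolding coeff_def using bound_int amgm by (rule integral_abs_bound_integral)
  also have "\<dots> = ((LINT x|M. (f x)\<^sup>2) + (LINT x|M. (\<phi> j x)\<^sup>2)) / 2"
    using f \<phi> by simp
  also have "(LINT x|M. (\<phi> j x)\<^sup>2) = 1"
    using norm1 by (simp add: power2_eq_square)
  finally show ?thesis .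
qed

theorem lemma2:
  fixes M :: "real measure" and \<phi> :: "nat \<Rightarrow> real \<Rightarrow> real" and k A C :: real
  assumes "space M = {0..1}"
    and "sets M = sets (restrict_space borel {0..1::real})"
    and "orthonormal_basis_L2 M \<phi>"
    and "A > 0" and "k > 1/2" and "C \<ge> A\<^sup>2 / (2*k - 1)"
  shows "Ecal M \<phi> k A \<subseteq> Theta M \<phi> k A C \<and> Theta M \<phi> k A C \<subseteq> Acal M \<phi> k A C"
proof
  show "Ecal M \<phi> k A \<subseteq> Theta M \<phi> k A C"
  proof
    fix f assume "f \<in> Ecal M \<phi> k A"
    then have f: "f \<in> L2 M" and decay: "\<And>j. j \<ge> 1 \<Longrightarrow> \<bar>coeff M \<phi> f j\<bar> \<le> A * real j powr (-k)"
      unfolding Ecal_def by auto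
    have "tail_sq (coeff M \<phi> f) J \<le> C * real J powr (-2*k+1)" if "J \<ge> 1" for J
    proof -
      have "tail_sq (coeff M \<phi> f) J \<le> A\<^sup>2 / (2*k-1) * real J powr (-2*k+1)"
        using that decay by (intro tail_sq_le_powr[OF assms(5)]) auto
      also have "\<dots> \<le> C * real J powr (-2*k+1)"
        using assms(6) by (intro mult_right_mono) auto
      finally show ?thesis .
    qed
    then show "f \<in> Theta M \<phi> k A C"
      unfolding Theta_def using f decay rearr_le_powr assms(4,5) by simp
  qed
  show "Theta M \<phi> k A C \<subseteq> Acal M \<phi> k A C"
  proof
    fix f assume f: "f \<in> Theta M \<phi> k A C"
    then have "\<bar>coeff M \<phi> f 1\<bar> \<le> rearr (coeff M \<phi> f) 1"
      by (intro abs_le_rearr_1[OF abs_coeff_le[OF assms(3)]]) (simp_all add: Theta_def)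
    with f show "f \<in> Acal M \<phi> k A C"
      unfolding Theta_def Acal_def by (auto intro: order_trans)
  qed
qed

end
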